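(* Let $k\ge1$ and $r\ge0$ be integers, and let $\mathcal{C}$ be a multiset of $2^k+r$ non-zero residues modulo $2^{k+1}$ such that no sub-collection sums to $2^k$ modulo $2^{k+1}$, and such that for no odd $\lambda$ can $\lambda\cdot\mathcal{C}$ be type 1 compressed. Fix $i$ and a sub-multiset $\mathcal{C}_i\subseteq\mathcal{C}$ with $|\mathcal{C}_i|=i$. Choose an element $x$ of $\mathcal{C}\setminus\mathcal{C}_i$ so that, with $\mathcal{C}_{i+1}=\mathcal{C}_i\cup\{x\}$, the size $|\mathcal{C}_{i+1}^*\setminus\mathcal{C}_i^*|$ is maximal. Then $|\mathcal{C}_{i+1}^*\setminus\mathcal{C}_i^*|>2$ unless at least one of the following holds: (1) $|\mathcal{C}_i^*|\le5$ or $|\mathcal{C}_i^*|\ge2^{k+1}-5$; (2) all elements of $\mathcal{C}\setminus\mathcal{C}_i$ are even; (3) there is an odd residue $u$ such that every element of $\mathcal{C}\setminus\mathcal{C}_i$ lies in $\{u,-u,2^k-u,-(2^k-u)\}$ modulo $2^{k+1}$.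
   Context: Multisets are called collections; $\mathcal{C}\setminus\mathcal{C}_i$ is the multiset difference. For a multiset $\mathcal{D}=\{a_1,\dots,a_d\}$ of residues modulo $2^{k+1}$, $\mathcal{D}^*=\{\sum_{i\in I}a_i \bmod 2^{k+1}: I\subseteq[d]\}$ (including $0$). $\lambda\cdot\mathcal{C}=\{\lambda c:c\in\mathcal{C}\}$. For a residue $t$, $|t|$ is the minimal absolute value of an integer in its residue class. A multiset $\mathcal{D}$ can be type 1 compressed if for some $\lambda>0$ it contains at least $\lambda$ elements each equal to $\pm1$ and also an element $t$ with $1<|t|\le\lambda+1$. *)

theory Defs
  imports Main "HOL-Library.Multiset"
begin

text \<open>Residues modulo m are represented by integers; all comparisons are made modulo m.\<close>

definition subset_sums :: "int \<Rightarrow> int multiset \<Rightarrow> int set" where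
  "subset_sums m D = {sum_mset S mod m | S. S \<subseteq># D}"

definition res_abs :: "int \<Rightarrow> int \<Rightarrow> int" where
  "res_abs m t = min (t mod m) (m - t mod m)"

definition type1_compressible :: "int \<Rightarrow> int multiset \<Rightarrow> bool" where
  "type1_compressible m D \<longleftrightarrow>
     (\<exists>lam::nat. lam > 0 \<and>
        size (filter_mset (\<lambda>a. a mod m = 1 mod m \<or> a mod m = (-1) mod m) D) \<ge> lam \<and>
        (\<exists>t\<in>#D. 1 < res_abs m t \<and> res_abs m t \<le> int lam + 1))"

definition scale_mset :: "int \<Rightarrow> int \<Rightarrow> int multiset \<Rightarrow> int multiset" where
  "scale_mset m lam C = image_mset (\<lambda>c. (lam * c) mod m) C"

end

theory Submission
  imports Defs "HOL-Number_Theory.Cong"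
begin

(*
  Write A = C_i^* as a subset of Z/2^(k+1), encoded by the predicate "t mod M \<in> A" on the
  integers; adding z to C_i creates exactly |(A + z) - A| new sums. If the theorem failed, every
  z in C - C_i would create at most two new sums, 6 <= |A| <= 2^(k+1) - 6, and some y in C - C_i
  would be odd. Multiplying by the inverse l of y turns y into 1, and |(A + 1) - A| <= 2 says
  that A consists of at most two cyclic runs. Counting the points of each run that a shift by d
  carries into the neighbouring gap shows |(A + d) - A| >= 3 unless d is 0, +-1, +-2, 2^k or
  2^k +- 1. So l z is one of these residues: 0 and 2^k are excluded by the hypotheses on zero
  elements and half sums, +-2 would make l C type 1 compressible (it contains l y = 1), and the
  remaining values give z = +-y or z = +-(2^k - y).
*)

section \<open>Periodic predicates on the integers\<close>

definition mod_periodic :: "int \<Rightarrow> (int \<Rightarrow> bool) \<Rightarrow> bool" where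
  "mod_periodic M P \<longleftrightarrow> (\<forall>a b. a mod M = b mod M \<longrightarrow> P a = P b)"

definition count_mod :: "int \<Rightarrow> (int \<Rightarrow> bool) \<Rightarrow> nat" where
  "count_mod M P = card {t \<in> {0..<M}. P t}"

text \<open>For the set \<open>A\<close> of residues satisfying \<open>P\<close>, this is \<open>|(A + d) - A|\<close>.\<close>

definition shift_gain :: "int \<Rightarrow> (int \<Rightarrow> bool) \<Rightarrow> int \<Rightarrow> nat" where
  "shift_gain M P d = count_mod M (\<lambda>t. \<not> P t \<and> P (t - d))"

lemma mod_periodicD: "mod_periodic M P \<Longrightarrow> a mod M = b mod M \<Longrightarrow> P a = P b"
  unfolding mod_periodic_def by blast

lemma mod_periodic_mod: "mod_periodic M P \<Longrightarrow> P (a mod M) = P a"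
  using mod_periodicD[of M P "a mod M" a] by simp

lemma mod_periodic_minus_period: "mod_periodic M P \<Longrightarrow> P (t - M) = P t"
  using mod_periodicD[of M P "t - M" t] by simp

lemma mod_periodic_interval_shift:
  assumes "mod_periodic M P" "\<forall>t. a \<le> t \<and> t < b \<longrightarrow> P t"
  shows "\<forall>t. a + M \<le> t \<and> t < b + M \<longrightarrow> P t" "\<forall>t. a - M \<le> t \<and> t < b - M \<longrightarrow> P t"
proof -
  show "\<forall>t. a + M \<le> t \<and> t < b + M \<longrightarrow> P t"
  proof (intro allI impI)
    fix t assume "a + M \<le> t \<and> t < b + M"
    then show "P t" using assms(2) mod_periodic_minus_period[OF assms(1), of t] by simp
  qed
  show "\<forall>t. a - M \<le> t \<and> t < b - M \<longrightarrow> P t"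
  proof (intro allI impI)
    fix t assume "a - M \<le> t \<and> t < b - M"
    then show "P t" using assms(2) mod_periodic_minus_period[OF assms(1), of "t + M"] by simp
  qed
qed

lemma mod_periodic_not: "mod_periodic M P \<Longrightarrow> mod_periodic M (\<lambda>t. \<not> P t)"
  unfolding mod_periodic_def by metis

lemma mod_periodic_compose_shift:
  assumes "mod_periodic M P"
  shows "mod_periodic M (\<lambda>t. F (P t) (P (t - d)))"
  unfolding mod_periodic_def
proof (intro allI impI)
  fix a b :: int assume "a mod M = b mod M"
  moreover have "(a - d) mod M = (b - d) mod M" using calculation by (metis mod_diff_left_eq)
  ultimately have "P a = P b" "P (a - d) = P (b - d)" using mod_periodicD[OF assms] by blast+
  then show "F (P a) (P (a - d)) = F (P b) (P (b - d))" by simp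
qed

lemma count_mod_split:
  "count_mod M P = count_mod M (\<lambda>t. P t \<and> Q t) + count_mod M (\<lambda>t. P t \<and> \<not> Q t)"
proof -
  have fin: "finite {t \<in> {0..<M}. R t}" for R :: "int \<Rightarrow> bool"
    by (rule finite_subset[of _ "{0..<M}"]) auto
  have "{t \<in> {0..<M}. P t} = {t \<in> {0..<M}. P t \<and> Q t} \<union> {t \<in> {0..<M}. P t \<and> \<not> Q t}"
    by blast
  also have "card \<dots> = card {t \<in> {0..<M}. P t \<and> Q t} + card {t \<in> {0..<M}. P t \<and> \<not> Q t}"
    by (rule card_Un_disjoint[OF fin fin]) blast
  finally show ?thesis unfolding count_mod_def .
qed

lemma count_mod_not: "count_mod M P + count_mod M (\<lambda>t. \<not> P t) = nat M"
proof -
  have "{t \<in> {0..<M}. True} = {0..<M}" by blast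
  then have "count_mod M (\<lambda>_. True) = nat M" unfolding count_mod_def by simp
  then show ?thesis using count_mod_split[of M "\<lambda>_. True" P] by simp
qed

lemma mod_eq_in_window_imp_eq:
  fixes M :: int
  assumes "x mod M = y mod M" "x \<in> {a..<a + M}" "y \<in> {a..<a + M}"
  shows "x = y"
proof (rule ccontr)
  assume "x \<noteq> y"
  moreover have "M dvd x - y" using assms(1) by (simp add: mod_eq_dvd_iff)
  ultimately have "\<bar>M\<bar> \<le> \<bar>x - y\<bar>" by (intro dvd_imp_le_int) auto
  moreover have "a \<le> x" "x < a + M" "a \<le> y" "y < a + M" using assms(2,3) by auto
  ultimately show False by arith
qed

lemma card_le_count_mod:
  fixes M :: int
  assumes "mod_periodic M P" "S \<subseteq> {a..<a + M}" "\<forall>t\<in>S. P t"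
  shows "card S \<le> count_mod M P"
proof -
  have "inj_on (\<lambda>t. t mod M) S"
  proof (rule inj_onI)
    fix x y assume "x \<in> S" "y \<in> S" "x mod M = y mod M"
    then show "x = y" using assms(2) mod_eq_in_window_imp_eq[of x M y a] by blast
  qed
  then have "card S = card ((\<lambda>t. t mod M) ` S)" by (rule card_image[symmetric])
  also have "\<dots> \<le> card {t \<in> {0..<M}. P t}"
  proof (rule card_mono)
    show "finite {t \<in> {0..<M}. P t}" by (rule finite_subset[of _ "{0..<M}"]) auto
    show "(\<lambda>t. t mod M) ` S \<subseteq> {t \<in> {0..<M}. P t}"
      using assms mod_periodic_mod[OF assms(1)] by auto
  qed
  finally show ?thesis unfolding count_mod_def .
qed

lemma card_two_intervals_le_count_mod:
  fixes a a1 b1 a2 b2 :: int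
  assumes "mod_periodic M P" "{a1..<b1} \<union> {a2..<b2} \<subseteq> {a..<a + M}" "b1 \<le> a2"
    and "\<forall>t \<in> {a1..<b1} \<union> {a2..<b2}. P t"
  shows "card {a1..<b1} + card {a2..<b2} \<le> count_mod M P"
proof -
  have "{a1..<b1} \<inter> {a2..<b2} = {}" using assms(3) by auto
  then have "card ({a1..<b1} \<union> {a2..<b2}) = card {a1..<b1} + card {a2..<b2}"
    by (simp add: card_Un_disjoint)
  moreover have "card ({a1..<b1} \<union> {a2..<b2}) \<le> count_mod M P"
    using assms(1,2,4) by (rule card_le_count_mod)
  ultimately show ?thesis by simp
qed

lemma count_mod_affine:
  fixes M y c :: int
  assumes "M > 0" "mod_periodic M P" "coprime y M"
  shows "count_mod M (\<lambda>t. P (y * t + c)) = count_mod M P"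
proof -
  define f where "f t = (y * t + c) mod M" for t
  have inj: "inj_on f {0..<M}"
  proof (rule inj_onI)
    fix a b assume ab: "a \<in> {0..<M}" "b \<in> {0..<M}" and "f a = f b"
    then have "M dvd y * (a - b)"
      unfolding f_def by (simp add: mod_eq_dvd_iff algebra_simps)
    then have "M dvd a - b"
      using assms(3) by (simp add: coprime_dvd_mult_right_iff coprime_commute)
    then have "a mod M = b mod M" by (simp add: mod_eq_dvd_iff)
    then show "a = b" using ab mod_eq_in_window_imp_eq[of a M b 0] by simp
  qed
  have onto: "f ` {0..<M} = {0..<M}"
    using inj assms(1) by (intro endo_inj_surj) (auto simp: f_def)
  have img: "f ` {t \<in> {0..<M}. P (f t)} = {s \<in> {0..<M}. P s}"
  proof
    show "f ` {t \<in> {0..<M}. P (f t)} \<subseteq> {s \<in> {0..<M}. P s}"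
      using onto by auto
    show "{s \<in> {0..<M}. P s} \<subseteq> f ` {t \<in> {0..<M}. P (f t)}"
    proof
      fix s assume s: "s \<in> {s \<in> {0..<M}. P s}"
      then obtain t where "t \<in> {0..<M}" "s = f t"
        using onto by (metis (no_types, lifting) imageE mem_Collect_eq)
      then show "s \<in> f ` {t \<in> {0..<M}. P (f t)}" using s by auto
    qed
  qed
  have "{t \<in> {0..<M}. P (y * t + c)} = {t \<in> {0..<M}. P (f t)}"
    using mod_periodic_mod[OF assms(2)] by (simp add: f_def)
  then have "count_mod M (\<lambda>t. P (y * t + c)) = card {t \<in> {0..<M}. P (f t)}"
    unfolding count_mod_def by simp
  also have "\<dots> = card (f ` {t \<in> {0..<M}. P (f t)})"
    by (rule card_image[symmetric], rule inj_on_subset[OF inj]) auto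
  also have "\<dots> = count_mod M P"
    unfolding count_mod_def img ..
  finally show ?thesis .
qed

lemma count_mod_translate:
  assumes "M > 0" "mod_periodic M P"
  shows "count_mod M (\<lambda>t. P (t - d)) = count_mod M P"
  using count_mod_affine[OF assms, of 1 "- d"] by simp

lemma shift_gain_eq_loss:
  assumes "M > 0" "mod_periodic M P"
  shows "shift_gain M P d = count_mod M (\<lambda>t. P t \<and> \<not> P (t - d))"
proof -
  have "count_mod M P = count_mod M (\<lambda>t. P t \<and> P (t - d)) + count_mod M (\<lambda>t. P t \<and> \<not> P (t - d))"
    by (rule count_mod_split)
  moreover have "count_mod M (\<lambda>t. P (t - d))
      = count_mod M (\<lambda>t. P t \<and> P (t - d)) + shift_gain M P d"
    using count_mod_split[of M "\<lambda>t. P (t - d)" P]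
    unfolding shift_gain_def by (simp add: conj_commute)
  ultimately show ?thesis using count_mod_translate[OF assms] by simp
qed

lemma shift_gain_minus:
  assumes "M > 0" "mod_periodic M P"
  shows "shift_gain M P (M - d) = shift_gain M P d"
proof -
  have "P (t - (M - d)) = P (t + d)" for t
    using assms(2) by (rule mod_periodicD) (simp add: mod_eq_dvd_iff)
  then have "shift_gain M P (M - d) = count_mod M (\<lambda>t. \<not> P t \<and> P (t - - d))"
    unfolding shift_gain_def by simp
  also have "\<dots> = count_mod M (\<lambda>t. \<not> P (t - d) \<and> P t)"
    using count_mod_translate[OF assms(1) mod_periodic_compose_shift[OF assms(2), where F = "\<lambda>a b. \<not> a \<and> b" and d = "- d"], where d = d]
    by simp
  also have "\<dots> = shift_gain M P d"
    using shift_gain_eq_loss[OF assms] by (simp add: conj_commute)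
  finally show ?thesis .
qed

section \<open>Runs of a periodic predicate\<close>

definition run_starts :: "int \<Rightarrow> (int \<Rightarrow> bool) \<Rightarrow> int set" where
  "run_starts M P = {t \<in> {0..<M}. P t \<and> \<not> P (t - 1)}"

definition one_run :: "int \<Rightarrow> (int \<Rightarrow> bool) \<Rightarrow> int \<Rightarrow> int \<Rightarrow> bool" where
  "one_run M P u e \<longleftrightarrow> u < e \<and> e < u + M
    \<and> (\<forall>t. u \<le> t \<and> t < e \<longrightarrow> P t) \<and> (\<forall>t. e \<le> t \<and> t < u + M \<longrightarrow> \<not> P t)"

definition two_runs :: "int \<Rightarrow> (int \<Rightarrow> bool) \<Rightarrow> int \<Rightarrow> int \<Rightarrow> int \<Rightarrow> int \<Rightarrow> bool" where
  "two_runs M P u1 e1 u2 e2 \<longleftrightarrow> u1 < e1 \<and> e1 < u2 \<and> u2 < e2 \<and> e2 < u1 + M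
    \<and> (\<forall>t. u1 \<le> t \<and> t < e1 \<longrightarrow> P t) \<and> (\<forall>t. e1 \<le> t \<and> t < u2 \<longrightarrow> \<not> P t)
    \<and> (\<forall>t. u2 \<le> t \<and> t < e2 \<longrightarrow> P t) \<and> (\<forall>t. e2 \<le> t \<and> t < u1 + M \<longrightarrow> \<not> P t)"

lemma exists_run_start_between:
  fixes P :: "int \<Rightarrow> bool"
  assumes "\<not> P s" "P t" "s < t"
  shows "\<exists>w. s < w \<and> w \<le> t \<and> P w \<and> \<not> P (w - 1)"
  using assms(3,2)
proof (induction t rule: int_gr_induct)
  case base
  then show ?case using assms(1) by (intro exI[of _ "s + 1"]) simp
next
  case (step t)
  show ?case
  proof (cases "P t")
    case True
    then obtain w where "s < w" "w \<le> t" "P w" "\<not> P (w - 1)" using step.IH by blast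
    then show ?thesis by (intro exI[of _ w]) simp
  next
    case False
    then show ?thesis using step.prems step.hyps by (intro exI[of _ "t + 1"]) simp
  qed
qed

lemma run_between_run_starts:
  fixes P :: "int \<Rightarrow> bool"
  assumes "P u" "\<not> P (v - 1)" "u < v"
    and no_start: "\<forall>w. u < w \<and> w < v \<longrightarrow> \<not> (P w \<and> \<not> P (w - 1))"
  shows "\<exists>e. u < e \<and> e < v \<and> (\<forall>t. u \<le> t \<and> t < e \<longrightarrow> P t) \<and> (\<forall>t. e \<le> t \<and> t < v \<longrightarrow> \<not> P t)"
proof -
  define n where "n = (LEAST n. \<not> P (u + int n))"
  have "\<exists>n. \<not> P (u + int n)"
    using assms(2,3) by (intro exI[of _ "nat (v - 1 - u)"]) simp
  then have n: "\<not> P (u + int n)"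
    unfolding n_def by (rule LeastI_ex[where P = "\<lambda>n. \<not> P (u + int n)"])
  have below: "P (u + int m)" if "m < n" for m
    using not_less_Least[OF that[unfolded n_def]] by simp
  define e where "e = u + int n"
  have "n \<noteq> 0" using n assms(1) by (intro notI) simp
  moreover have "\<not> nat (v - 1 - u) < n" using below[of "nat (v - 1 - u)"] assms(2,3) by auto
  ultimately have "u < e" "e < v" unfolding e_def by auto
  moreover have "P t" if "u \<le> t" "t < e" for t
    using below[of "nat (t - u)"] that unfolding e_def by simp
  moreover have "\<not> P t" if "e \<le> t" "t < v" for t
  proof
    assume "P t"
    then have "e \<noteq> t" using n unfolding e_def by auto
    then have "e < t" using that by simp
    then obtain w where "e < w" "w \<le> t" "P w" "\<not> P (w - 1)"
      using exists_run_start_between[of P e t] n \<open>P t\<close> unfolding e_def by blast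
    then show False using no_start \<open>u < e\<close> that by auto
  qed
  ultimately show ?thesis by blast
qed

lemma run_start_mod_mem:
  assumes "M > 0" "mod_periodic M P" "P w" "\<not> P (w - 1)"
  shows "w mod M \<in> run_starts M P"
proof -
  have "P (w mod M - 1) = P (w - 1)"
    using assms(2) by (rule mod_periodicD) (simp add: mod_diff_left_eq)
  then show ?thesis
    using assms mod_periodic_mod[OF assms(2), of w] unfolding run_starts_def by simp
qed

lemma run_starts_nonempty:
  assumes "M > 0" "mod_periodic M P" "0 < count_mod M P" "count_mod M P < nat M"
  shows "run_starts M P \<noteq> {}"
proof -
  have "{t \<in> {0..<M}. P t} \<noteq> {}"
    using assms(3) unfolding count_mod_def card_gt_0_iff by blast
  then obtain t0 where t0: "0 \<le> t0" "t0 < M" "P t0" by auto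
  have "{t \<in> {0..<M}. P t} \<noteq> {0..<M}"
    using assms(4) unfolding count_mod_def by (intro notI) simp
  then have "\<exists>s0 \<in> {0..<M}. \<not> P s0" by blast
  then obtain s0 where s0: "0 \<le> s0" "s0 < M" "\<not> P s0" by auto
  have "P (t0 + M)" using t0(3) mod_periodic_minus_period[OF assms(2), of "t0 + M"] by simp
  then obtain t1 where "P t1" "s0 < t1"
    using t0 s0 by (cases "s0 < t0") auto
  then obtain w where "P w" "\<not> P (w - 1)"
    using exists_run_start_between[of P s0 t1] s0(3) by blast
  then show ?thesis using run_start_mod_mem[OF assms(1,2)] by blast
qed

lemma one_run_of_run_starts:
  assumes "M > 0" "mod_periodic M P" and starts: "run_starts M P = {u}"
  shows "\<exists>e. one_run M P u e"
  unfolding one_run_def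
proof (rule run_between_run_starts)
  have u: "0 \<le> u" "u < M" "P u" "\<not> P (u - 1)" using starts unfolding run_starts_def by auto
  then show "P u" "u < u + M" by simp_all
  show "\<not> P (u + M - 1)"
    using u mod_periodic_minus_period[OF assms(2), of "u + M - 1"] by simp
  show "\<forall>w. u < w \<and> w < u + M \<longrightarrow> \<not> (P w \<and> \<not> P (w - 1))"
  proof (intro allI impI notI)
    fix w assume w: "u < w \<and> w < u + M" "P w \<and> \<not> P (w - 1)"
    then have "w mod M = u" using run_start_mod_mem[OF assms(1,2), of w] starts by blast
    then have "w = u" using w u mod_eq_in_window_imp_eq[of w M u u] by simp
    then show False using w by simp
  qed
qed

lemma two_runs_of_run_starts:
  assumes "M > 0" "mod_periodic M P" and starts: "run_starts M P = {u1, u2}" and "u1 < u2"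
  shows "\<exists>e1 e2. two_runs M P u1 e1 u2 e2"
proof -
  have u1: "0 \<le> u1" "u1 < M" "P u1" "\<not> P (u1 - 1)"
    and u2: "0 \<le> u2" "u2 < M" "P u2" "\<not> P (u2 - 1)"
    using starts unfolding run_starts_def by auto
  have u1M: "\<not> P (u1 + M - 1)"
    using u1 mod_periodic_minus_period[OF assms(2), of "u1 + M - 1"] by simp
  have start_cases: "w = u1 \<or> w = u2" if "u1 \<le> w" "w < u1 + M" "P w" "\<not> P (w - 1)" for w
  proof -
    have "w mod M = u1 \<or> w mod M = u2"
      using run_start_mod_mem[OF assms(1,2) that(3,4)] starts by blast
    then show ?thesis
      using that u1 u2 \<open>u1 < u2\<close> mod_eq_in_window_imp_eq[of w M u1 u1]
        mod_eq_in_window_imp_eq[of w M u2 u1]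
      by auto
  qed
  have no_start: "\<not> (P w \<and> \<not> P (w - 1))" if "u1 < w" "w < u1 + M" "w \<noteq> u2" for w
    using start_cases[of w] that by auto
  have no_start1: "\<forall>w. u1 < w \<and> w < u2 \<longrightarrow> \<not> (P w \<and> \<not> P (w - 1))"
    using no_start u1(1) u2(2) by simp
  have no_start2: "\<forall>w. u2 < w \<and> w < u1 + M \<longrightarrow> \<not> (P w \<and> \<not> P (w - 1))"
    using no_start \<open>u1 < u2\<close> by simp
  obtain e1 where "u1 < e1" "e1 < u2" "\<forall>t. u1 \<le> t \<and> t < e1 \<longrightarrow> P t"
      "\<forall>t. e1 \<le> t \<and> t < u2 \<longrightarrow> \<not> P t"
    using run_between_run_starts[OF u1(3) u2(4) \<open>u1 < u2\<close> no_start1] by blast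
  moreover obtain e2 where "u2 < e2" "e2 < u1 + M" "\<forall>t. u2 \<le> t \<and> t < e2 \<longrightarrow> P t"
      "\<forall>t. e2 \<le> t \<and> t < u1 + M \<longrightarrow> \<not> P t"
    using run_between_run_starts[OF u2(3) u1M _ no_start2] u1 u2 by auto
  ultimately show ?thesis unfolding two_runs_def by blast
qed

section \<open>Shifts of sets with at most two runs\<close>

text \<open>The number of points of a run of length \<open>r\<close>, preceded by a gap of length \<open>g\<close>, that a
  shift by \<open>d\<close> carries into the gap.\<close>

definition run_loss :: "int \<Rightarrow> int \<Rightarrow> int \<Rightarrow> nat" where
  "run_loss d g r = nat (min r d - max 0 (d - g))"

lemma run_shift_loss:
  fixes a r g d :: int
  assumes "\<forall>t. a \<le> t \<and> t < a + r \<longrightarrow> P t" "\<forall>t. a - g \<le> t \<and> t < a \<longrightarrow> \<not> P t"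
  shows "\<forall>t \<in> {a + max 0 (d - g)..<a + min r d}. P t \<and> \<not> P (t - d)"
proof
  fix t assume "t \<in> {a + max 0 (d - g)..<a + min r d}"
  then have "a \<le> t" "t < a + r" "a - g \<le> t - d" "t - d < a" by auto
  then show "P t \<and> \<not> P (t - d)" using assms by blast
qed

lemma one_run_not:
  assumes "mod_periodic M P" "one_run M P u e"
  shows "one_run M (\<lambda>t. \<not> P t) e (u + M)"
  using assms(2) mod_periodic_interval_shift(1)[OF assms(1), of u e]
  unfolding one_run_def by simp

lemma one_run_count_le:
  assumes "mod_periodic M P" "one_run M P u e"
  shows "e - u \<le> int (count_mod M P)"
proof -
  have "card {u..<e} \<le> count_mod M P"
    using assms unfolding one_run_def by (intro card_le_count_mod[where a = u]) auto
  then show ?thesis by simp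
qed

lemma one_run_shift_loss:
  assumes per: "mod_periodic M P" and run: "one_run M P u e"
  shows "run_loss d (u + M - e) (e - u) \<le> count_mod M (\<lambda>t. P t \<and> \<not> P (t - d))"
proof -
  define r where "r = e - u"
  define g where "g = u + M - e"
  have "\<forall>t. u \<le> t \<and> t < u + r \<longrightarrow> P t" using run unfolding one_run_def r_def by simp
  moreover have "\<forall>t. u - g \<le> t \<and> t < u \<longrightarrow> \<not> P t"
    using run mod_periodic_interval_shift(2)[OF mod_periodic_not[OF per], of e "u + M"]
    unfolding one_run_def g_def by simp
  ultimately have loss: "\<forall>t \<in> {u + max 0 (d - g)..<u + min r d}. P t \<and> \<not> P (t - d)"
    by (rule run_shift_loss)
  have "card {u + max 0 (d - g)..<u + min r d} \<le> count_mod M (\<lambda>t. P t \<and> \<not> P (t - d))"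
  proof (rule card_le_count_mod[OF _ _ loss])
    show "mod_periodic M (\<lambda>t. P t \<and> \<not> P (t - d))"
      using mod_periodic_compose_shift[OF per, of "\<lambda>a b. a \<and> \<not> b"] by simp
    show "{u + max 0 (d - g)..<u + min r d} \<subseteq> {u..<u + M}"
      using run unfolding one_run_def r_def by auto
  qed
  then show ?thesis unfolding run_loss_def r_def g_def by simp
qed

lemma two_runs_not:
  assumes "mod_periodic M P" "two_runs M P u1 e1 u2 e2"
  shows "two_runs M (\<lambda>t. \<not> P t) e1 u2 e2 (u1 + M)"
  using assms(2) mod_periodic_interval_shift(1)[OF assms(1), of u1 e1]
  unfolding two_runs_def by simp

lemma two_runs_count_le:
  assumes "mod_periodic M P" "two_runs M P u1 e1 u2 e2"
  shows "(e1 - u1) + (e2 - u2) \<le> int (count_mod M P)"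
proof -
  have "card {u1..<e1} + card {u2..<e2} \<le> count_mod M P"
    using assms unfolding two_runs_def
    by (intro card_two_intervals_le_count_mod[where a = u1]) auto
  then show ?thesis using assms(2) unfolding two_runs_def by simp
qed

lemma two_runs_shift_loss:
  assumes per: "mod_periodic M P" and runs: "two_runs M P u1 e1 u2 e2"
  shows "run_loss d (u1 + M - e2) (e1 - u1) + run_loss d (u2 - e1) (e2 - u2)
    \<le> count_mod M (\<lambda>t. P t \<and> \<not> P (t - d))"
proof -
  define r1 where "r1 = e1 - u1"
  define g1 where "g1 = u2 - e1"
  define r2 where "r2 = e2 - u2"
  define g2 where "g2 = u1 + M - e2"
  have order: "u1 < e1" "e1 < u2" "u2 < e2" "e2 < u1 + M" using runs unfolding two_runs_def by auto
  have "\<forall>t. u1 \<le> t \<and> t < u1 + r1 \<longrightarrow> P t" "\<forall>t. u2 \<le> t \<and> t < u2 + r2 \<longrightarrow> P t"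
      "\<forall>t. u2 - g1 \<le> t \<and> t < u2 \<longrightarrow> \<not> P t"
    using runs unfolding two_runs_def r1_def r2_def g1_def by simp_all
  moreover have "\<forall>t. u1 - g2 \<le> t \<and> t < u1 \<longrightarrow> \<not> P t"
    using runs mod_periodic_interval_shift(2)[OF mod_periodic_not[OF per], of e2 "u1 + M"]
    unfolding two_runs_def g2_def by simp
  ultimately have loss: "\<forall>t \<in> {u1 + max 0 (d - g2)..<u1 + min r1 d} \<union> {u2 + max 0 (d - g1)..<u2 + min r2 d}.
      P t \<and> \<not> P (t - d)"
    unfolding ball_Un using run_shift_loss[of u1 r1 P g2 d] run_shift_loss[of u2 r2 P g1 d] by blast
  have "card {u1 + max 0 (d - g2)..<u1 + min r1 d} + card {u2 + max 0 (d - g1)..<u2 + min r2 d}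
      \<le> count_mod M (\<lambda>t. P t \<and> \<not> P (t - d))"
  proof (rule card_two_intervals_le_count_mod[OF _ _ _ loss])
    show "mod_periodic M (\<lambda>t. P t \<and> \<not> P (t - d))"
      using mod_periodic_compose_shift[OF per, of "\<lambda>a b. a \<and> \<not> b"] by simp
    show "{u1 + max 0 (d - g2)..<u1 + min r1 d} \<union> {u2 + max 0 (d - g1)..<u2 + min r2 d}
        \<subseteq> {u1..<u1 + M}"
      using order unfolding r1_def r2_def by (auto simp: min_def max_def)
    show "u1 + min r1 d \<le> u2 + max 0 (d - g1)"
      using order unfolding r1_def by (simp add: min_def max_def)
  qed
  then show ?thesis unfolding run_loss_def r1_def r2_def g1_def g2_def by simp
qed

lemma one_run_loss_ge_3:
  fixes r g d H :: int
  assumes "r + g = 2 * H" "6 \<le> r" "6 \<le> g" "3 \<le> d" "d \<le> H - 2"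
  shows "3 \<le> run_loss d g r"
  using assms unfolding run_loss_def by (simp add: min_def max_def le_nat_iff)

lemma two_runs_loss_ge_3:
  fixes r1 g1 r2 g2 d H :: int
  assumes "1 \<le> r1" "1 \<le> g1" "1 \<le> r2" "1 \<le> g2" "r1 + g1 + r2 + g2 = 2 * H"
    and "6 \<le> r1 + r2" "6 \<le> g1 + g2" "3 \<le> d" "d \<le> H - 2"
  shows "3 \<le> run_loss d g2 r1 + run_loss d g1 r2 \<or> 3 \<le> run_loss d r1 g1 + run_loss d r2 g2"
proof (rule ccontr)
  assume "\<not> ?thesis"
  then have "nat (min r1 d - max 0 (d - g2)) + nat (min r2 d - max 0 (d - g1)) \<le> 2"
    "nat (min g1 d - max 0 (d - r1)) + nat (min g2 d - max 0 (d - r2)) \<le> 2"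
    unfolding run_loss_def by simp_all
  then show False using assms by (simp add: min_def max_def split: if_splits)
qed

lemma one_run_shift_gain:
  fixes M H d :: int
  assumes MH: "M = 2 * H" and per: "mod_periodic M P"
    and size: "6 \<le> count_mod M P" "int (count_mod M P) + 6 \<le> M"
    and d: "3 \<le> d" "d \<le> H - 2" and run: "one_run M P u e"
  shows "3 \<le> shift_gain M P d"
proof -
  have M: "M > 0" using size by linarith
  have "e - u \<le> int (count_mod M P)" by (rule one_run_count_le[OF per run])
  moreover have "u + M - e \<le> int (count_mod M (\<lambda>t. \<not> P t))"
    using one_run_count_le[OF mod_periodic_not[OF per] one_run_not[OF per run]] by simp
  moreover have "int (count_mod M P) + int (count_mod M (\<lambda>t. \<not> P t)) = M"
    using count_mod_not[of M P] M by linarith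
  ultimately have "6 \<le> e - u" "6 \<le> u + M - e" using size by linarith+
  then have "3 \<le> run_loss d (u + M - e) (e - u)"
    using MH d by (simp add: one_run_loss_ge_3)
  also have "\<dots> \<le> shift_gain M P d"
    using one_run_shift_loss[OF per run] shift_gain_eq_loss[OF M per] by simp
  finally show ?thesis .
qed

lemma two_runs_shift_gain:
  fixes M H d :: int
  assumes MH: "M = 2 * H" and per: "mod_periodic M P"
    and size: "6 \<le> count_mod M P" "int (count_mod M P) + 6 \<le> M"
    and d: "3 \<le> d" "d \<le> H - 2" and runs: "two_runs M P u1 e1 u2 e2"
  shows "3 \<le> shift_gain M P d"
proof -
  have M: "M > 0" using size by linarith
  have order: "u1 < e1" "e1 < u2" "u2 < e2" "e2 < u1 + M" using runs unfolding two_runs_def by auto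
  have runs_not: "two_runs M (\<lambda>t. \<not> P t) e1 u2 e2 (u1 + M)" by (rule two_runs_not[OF per runs])
  have "(e1 - u1) + (e2 - u2) \<le> int (count_mod M P)" by (rule two_runs_count_le[OF per runs])
  moreover have "(u2 - e1) + (u1 + M - e2) \<le> int (count_mod M (\<lambda>t. \<not> P t))"
    by (rule two_runs_count_le[OF mod_periodic_not[OF per] runs_not])
  moreover have "int (count_mod M P) + int (count_mod M (\<lambda>t. \<not> P t)) = M"
    using count_mod_not[of M P] M by linarith
  ultimately have "6 \<le> (e1 - u1) + (e2 - u2)" "6 \<le> (u2 - e1) + (u1 + M - e2)"
    using size by linarith+
  note lengths = this
  have "3 \<le> run_loss d (u1 + M - e2) (e1 - u1) + run_loss d (u2 - e1) (e2 - u2)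
      \<or> 3 \<le> run_loss d (e1 - u1) (u2 - e1) + run_loss d (e2 - u2) (u1 + M - e2)"
    by (rule two_runs_loss_ge_3[where H = H]) (use lengths order MH d in linarith)+
  moreover have "run_loss d (u1 + M - e2) (e1 - u1) + run_loss d (u2 - e1) (e2 - u2) \<le> shift_gain M P d"
    using two_runs_shift_loss[OF per runs] shift_gain_eq_loss[OF M per] by simp
  moreover have "run_loss d (e1 - u1) (u2 - e1) + run_loss d (e2 - u2) (u1 + M - e2) \<le> shift_gain M P d"
    using two_runs_shift_loss[OF mod_periodic_not[OF per] runs_not, of d] unfolding shift_gain_def by simp
  ultimately show ?thesis by linarith
qed

lemma shift_gain_ge_3:
  fixes M H d :: int
  assumes MH: "M = 2 * H" and per: "mod_periodic M P"
    and size: "6 \<le> count_mod M P" "int (count_mod M P) + 6 \<le> M"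
    and few_runs: "shift_gain M P 1 \<le> 2" and d: "3 \<le> d" "d \<le> H - 2"
  shows "3 \<le> shift_gain M P d"
proof -
  have M: "M > 0" using size by linarith
  have "card (run_starts M P) \<le> 2"
    using few_runs shift_gain_eq_loss[OF M per, of 1] unfolding run_starts_def count_mod_def by simp
  moreover have "0 < card (run_starts M P)"
    unfolding card_gt_0_iff
  proof
    show "finite (run_starts M P)"
      unfolding run_starts_def by (rule finite_subset[of _ "{0..<M}"]) auto
    show "run_starts M P \<noteq> {}"
      using size by (intro run_starts_nonempty[OF M per]) linarith+
  qed
  ultimately have "card (run_starts M P) = 1 \<or> card (run_starts M P) = 2" by linarith
  then show ?thesis
  proof
    assume "card (run_starts M P) = 1"
    then obtain u where "run_starts M P = {u}" by (rule card_1_singletonE)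
    then obtain e where "one_run M P u e" using one_run_of_run_starts[OF M per] by blast
    then show ?thesis by (rule one_run_shift_gain[OF MH per size d])
  next
    assume "card (run_starts M P) = 2"
    then obtain x y where "run_starts M P = {x, y}" "x \<noteq> y" by (auto simp: card_2_iff)
    then have "run_starts M P = {min x y, max x y}" "min x y < max x y"
      by (auto simp: min_def max_def)
    then obtain e1 e2 where "two_runs M P (min x y) e1 (max x y) e2"
      using two_runs_of_run_starts[OF M per] by blast
    then show ?thesis by (rule two_runs_shift_gain[OF MH per size d])
  qed
qed

lemma shift_gain_le_2_cases:
  fixes M H d :: int
  assumes MH: "M = 2 * H" and per: "mod_periodic M P"
    and size: "6 \<le> count_mod M P" "int (count_mod M P) + 6 \<le> M"
    and few_runs: "shift_gain M P 1 \<le> 2" and small: "shift_gain M P d \<le> 2" and d: "0 \<le> d" "d < M"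
  shows "d \<in> {0, 1, 2, H - 1, H, H + 1, M - 2, M - 1}"
proof (rule ccontr)
  assume d_out: "d \<notin> {0, 1, 2, H - 1, H, H + 1, M - 2, M - 1}"
  have M: "M > 0" using size by linarith
  show False
  proof (cases "d \<le> H")
    case True
    then show False
      using shift_gain_ge_3[OF MH per size few_runs, of d] small d d_out by auto
  next
    case False
    then show False
      using shift_gain_ge_3[OF MH per size few_runs, of "M - d"] shift_gain_minus[OF M per, of d]
        small d d_out MH
      by auto
  qed
qed

lemma shift_gain_unit_cases:
  fixes M H y l z :: int
  assumes MH: "M = 2 * H" and per: "mod_periodic M P"
    and size: "6 \<le> count_mod M P" "int (count_mod M P) + 6 \<le> M"
    and inv: "[y * l = 1] (mod M)" and small: "shift_gain M P y \<le> 2" "shift_gain M P z \<le> 2"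
  shows "(l * z) mod M \<in> {0, 1, 2, H - 1, H, H + 1, M - 2, M - 1}"
proof -
  have M: "M > 0" using size by linarith
  have "coprime y M" using inv coprime_iff_invertible_int by blast
  define Q where "Q t = P (y * t)" for t
  have perQ: "mod_periodic M Q"
    using per unfolding Q_def mod_periodic_def by (metis mod_mult_right_eq)
  have "count_mod M Q = count_mod M P"
    using count_mod_affine[OF M per \<open>coprime y M\<close>, of 0] unfolding Q_def by simp
  moreover have gain: "shift_gain M Q ((l * x) mod M) = shift_gain M P x" for x
  proof -
    have "[y * ((l * x) mod M) = x] (mod M)"
      using cong_scalar_right[OF inv, of x] by (simp add: cong_def mod_mult_right_eq mult.assoc)
    then have "Q (t - (l * x) mod M) = P (y * t - x)" for t
      using per unfolding Q_def cong_def
      by (metis (no_types, lifting) mod_diff_right_eq mod_periodicD right_diff_distrib)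
    then have "shift_gain M Q ((l * x) mod M) = count_mod M (\<lambda>t. \<not> P (y * t + 0) \<and> P (y * t + 0 - x))"
      unfolding shift_gain_def Q_def by simp
    also have "\<dots> = shift_gain M P x"
      unfolding shift_gain_def
      using count_mod_affine[OF M mod_periodic_compose_shift[OF per, where F = "\<lambda>a b. \<not> a \<and> b" and d = x]
          \<open>coprime y M\<close>, where c = 0]
      by simp
    finally show ?thesis .
  qed
  moreover have "(l * y) mod M = 1"
  proof -
    have "(l * y) mod M = 1 mod M" using inv by (simp add: cong_def mult.commute)
    then show ?thesis using size by simp
  qed
  ultimately show ?thesis
    using shift_gain_le_2_cases[OF MH perQ, of "(l * z) mod M"] size small M gain[of y] gain[of z]
    by simp
qed

section \<open>Subset sums\<close>

lemma subset_sums_add_single: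
  "subset_sums M (D + {#z#}) = subset_sums M D \<union> (\<lambda>a. (a + z) mod M) ` subset_sums M D"
proof (intro equalityI subsetI)
  fix v assume "v \<in> subset_sums M (D + {#z#})"
  then obtain S where S: "S \<subseteq># D + {#z#}" "v = sum_mset S mod M"
    unfolding subset_sums_def by blast
  have S': "S - {#z#} \<subseteq># D" using S(1) by (simp add: subset_eq_diff_conv)
  show "v \<in> subset_sums M D \<union> (\<lambda>a. (a + z) mod M) ` subset_sums M D"
  proof (cases "z \<in># S")
    case True
    then have "sum_mset S = sum_mset (S - {#z#}) + z" by (simp add: sum_mset.remove)
    then have "v = (sum_mset (S - {#z#}) mod M + z) mod M"
      using S(2) by (simp add: mod_add_left_eq)
    then show ?thesis using S' unfolding subset_sums_def by blast
  next
    case False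
    then show ?thesis using S' S(2) unfolding subset_sums_def by auto
  qed
next
  fix v assume "v \<in> subset_sums M D \<union> (\<lambda>a. (a + z) mod M) ` subset_sums M D"
  then obtain S where S: "S \<subseteq># D" "v = sum_mset S mod M \<or> v = (sum_mset S mod M + z) mod M"
    unfolding subset_sums_def by blast
  then have "S \<subseteq># D + {#z#}" "S + {#z#} \<subseteq># D + {#z#}"
    using subset_mset.order_trans[OF S(1) mset_subset_eq_add_left[of D "{#z#}"]] by simp_all
  moreover have "sum_mset (S + {#z#}) = sum_mset S + z" by simp
  then have "v = sum_mset S mod M \<or> v = sum_mset (S + {#z#}) mod M"
    using S(2) by (metis mod_add_left_eq)
  ultimately show "v \<in> subset_sums M (D + {#z#})" unfolding subset_sums_def by blast
qed

lemma subset_sums_range: "M > 0 \<Longrightarrow> subset_sums M D \<subseteq> {0..<M}"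
  unfolding subset_sums_def by auto

lemma count_mod_mod_mem:
  assumes "A \<subseteq> {0..<M}"
  shows "count_mod M (\<lambda>t. t mod M \<in> A) = card A"
proof -
  have "{t \<in> {0..<M}. t mod M \<in> A} = A" using assms by auto
  then show ?thesis unfolding count_mod_def by simp
qed

lemma card_new_sums_eq_shift_gain:
  assumes "A \<subseteq> {0..<M}"
  shows "card ((\<lambda>a. (a + z) mod M) ` A - A) = shift_gain M (\<lambda>t. t mod M \<in> A) z"
proof -
  have "(\<lambda>a. (a + z) mod M) ` A - A = {t \<in> {0..<M}. t mod M \<notin> A \<and> (t - z) mod M \<in> A}"
  proof (intro equalityI subsetI)
    fix t assume "t \<in> (\<lambda>a. (a + z) mod M) ` A - A"
    then obtain a where "a \<in> A" "t = (a + z) mod M" "t \<notin> A" by blast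
    moreover have "M > 0" using \<open>a \<in> A\<close> assms by auto
    ultimately show "t \<in> {t \<in> {0..<M}. t mod M \<notin> A \<and> (t - z) mod M \<in> A}"
      using assms by (auto simp: mod_diff_left_eq)
  next
    fix t assume t: "t \<in> {t \<in> {0..<M}. t mod M \<notin> A \<and> (t - z) mod M \<in> A}"
    then have "t = ((t - z) mod M + z) mod M" by (simp add: mod_add_left_eq)
    then show "t \<in> (\<lambda>a. (a + z) mod M) ` A - A" using t by force
  qed
  then show ?thesis unfolding shift_gain_def count_mod_def by simp
qed

lemma card_new_subset_sums:
  assumes "M > 0"
  shows "card (subset_sums M (D + {#z#}) - subset_sums M D)
    = shift_gain M (\<lambda>t. t mod M \<in> subset_sums M D) z"
  using card_new_sums_eq_shift_gain[OF subset_sums_range[OF assms], of z]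
  unfolding subset_sums_add_single by (simp add: Un_Diff)

lemma odd_mult_half_mod:
  fixes y H :: int
  assumes "odd y"
  shows "(y * H) mod (2 * H) = H mod (2 * H)"
proof -
  obtain m where "y = 2 * m + 1" using assms by (rule oddE)
  then have "y * H - H = 2 * H * m" by (simp add: algebra_simps)
  then show ?thesis unfolding mod_eq_dvd_iff by simp
qed

lemma odd_mult_near_unit_mod:
  fixes y H d :: int
  assumes "odd y" "d \<in> {1, H - 1, H + 1, 2 * H - 1}"
  shows "(y * d) mod (2 * H) \<in> {y mod (2 * H), (- y) mod (2 * H), (H - y) mod (2 * H), (- (H - y)) mod (2 * H)}"
proof -
  obtain m where y: "y = 2 * m + 1" using assms(1) by (rule oddE)
  have "y * (H - 1) - (H - y) = 2 * H * m" "y * (H + 1) - (- (H - y)) = 2 * H * (m + 1)"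
    "y * (2 * H - 1) - (- y) = 2 * H * y"
    unfolding y by (simp_all add: algebra_simps)
  then show ?thesis using assms(2) by (auto simp: mod_eq_dvd_iff)
qed

lemma type1_compressible_one_two:
  assumes "4 < M" "a \<in># D" "a mod M = 1" "t \<in># D" "t mod M = 2 \<or> t mod M = M - 2"
  shows "type1_compressible M D"
proof -
  have "a \<in># filter_mset (\<lambda>a. a mod M = 1 mod M \<or> a mod M = (- 1) mod M) D"
    using assms(1-3) by simp
  then have "size (filter_mset (\<lambda>a. a mod M = 1 mod M \<or> a mod M = (- 1) mod M) D) \<noteq> 0"
    by (metis empty_iff set_mset_empty size_eq_0_iff_empty)
  then have "1 \<le> size (filter_mset (\<lambda>a. a mod M = 1 mod M \<or> a mod M = (- 1) mod M) D)"
    by linarith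
  moreover have "res_abs M t = 2"
    using assms(1,5) unfolding res_abs_def by auto
  ultimately show ?thesis
    unfolding type1_compressible_def using assms(4)
    by (intro exI[of _ "1 :: nat"] conjI bexI[of _ t]) simp_all
qed

lemma residue_cases_of_scaled:
  fixes M H y l z :: int
  assumes MH: "M = 2 * H" and "2 < H" and y: "odd y" "y \<in># C" and l: "[y * l = 1] (mod M)"
    and z: "z \<in># C" "(l * z) mod M \<in> {0, 1, 2, H - 1, H, H + 1, M - 2, M - 1}"
    and nonzero: "\<forall>c\<in>#C. c mod M \<noteq> 0"
    and no_half: "\<forall>S. S \<subseteq># C \<longrightarrow> sum_mset S mod M \<noteq> H"
    and no_compress: "\<forall>lam. odd lam \<longrightarrow> \<not> type1_compressible M (scale_mset M lam C)"
  shows "z mod M \<in> {y mod M, (- y) mod M, (H - y) mod M, (- (H - y)) mod M}"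
proof -
  define d where "d = (l * z) mod M"
  have zd: "z mod M = (y * d) mod M"
    using cong_scalar_left[OF l, of z] unfolding d_def cong_def by (simp add: mod_mult_right_eq ac_simps)
  have "d \<noteq> 0" using nonzero z(1) zd by auto
  moreover have "d \<noteq> H"
  proof
    assume "d = H"
    then have "sum_mset {#z#} mod M = H"
      using zd odd_mult_half_mod[OF y(1), of H] MH \<open>2 < H\<close> by simp
    moreover have "{#z#} \<subseteq># C" using z(1) by simp
    ultimately show False using no_half by blast
  qed
  moreover have "\<not> (d = 2 \<or> d = M - 2)"
  proof
    assume two: "d = 2 \<or> d = M - 2"
    have "2 * H dvd y * l - 1" using l MH unfolding cong_iff_dvd_diff by simp
    then have "2 dvd y * l - 1" by (rule dvd_mult_left)
    then have "odd l" by simp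
    have "(l * y) mod M = 1" using l MH \<open>2 < H\<close> unfolding cong_def by (simp add: mult.commute)
    moreover have "(l * y) mod M \<in># scale_mset M l C" "d \<in># scale_mset M l C"
      using y(2) z(1) unfolding scale_mset_def d_def by simp_all
    ultimately have "type1_compressible M (scale_mset M l C)"
      using two MH \<open>2 < H\<close>
      by (intro type1_compressible_one_two[of M "(l * y) mod M" _ d]) (simp_all add: d_def)
    then show False using no_compress \<open>odd l\<close> by blast
  qed
  ultimately have "d \<in> {1, H - 1, H + 1, 2 * H - 1}" using z(2) MH unfolding d_def by auto
  then show ?thesis using odd_mult_near_unit_mod[OF y(1)] zd MH by simp
qed

theorem lemma3p7:
  fixes k r i :: nat and C Ci :: "int multiset" and x :: int
  defines "M \<equiv> (2::int) ^ (k + 1)"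
  assumes k: "k \<ge> 1"
    and sizeC: "size C = 2 ^ k + r"
    and nonzero: "\<forall>c\<in>#C. c mod M \<noteq> 0"
    and no_half: "\<forall>S. S \<subseteq># C \<longrightarrow> sum_mset S mod M \<noteq> 2 ^ k"
    and no_compress: "\<forall>lam::int. odd lam \<longrightarrow> \<not> type1_compressible M (scale_mset M lam C)"
    and Ci_sub: "Ci \<subseteq># C" and Ci_size: "size Ci = i"
    and x_in: "x \<in># C - Ci"
    and x_max: "\<forall>y\<in>#C - Ci.
        card (subset_sums M (Ci + {#y#}) - subset_sums M Ci)
          \<le> card (subset_sums M (Ci + {#x#}) - subset_sums M Ci)"
  shows "card (subset_sums M (Ci + {#x#}) - subset_sums M Ci) > 2
    \<or> card (subset_sums M Ci) \<le> 5 \<or> int (card (subset_sums M Ci)) \<ge> M - 5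
    \<or> (\<forall>y\<in>#C - Ci. even y)
    \<or> (\<exists>u::int. odd u \<and> (\<forall>y\<in>#C - Ci. y mod M \<in>
          {u mod M, (-u) mod M, (2^k - u) mod M, (-(2^k - u)) mod M}))"
proof (rule ccontr)
  assume neg: "\<not> ?thesis"
  define H where "H = (2::int) ^ k"
  define P where "P t \<longleftrightarrow> t mod M \<in> subset_sums M Ci" for t
  have MH: "M = 2 * H" and M: "M > 0" unfolding M_def H_def by simp_all
  have per: "mod_periodic M P" unfolding P_def mod_periodic_def by simp
  have gain: "card (subset_sums M (Ci + {#z#}) - subset_sums M Ci) = shift_gain M P z" for z
    unfolding P_def by (rule card_new_subset_sums[OF M])
  have gain_x: "card (subset_sums M (Ci + {#x#}) - subset_sums M Ci) \<le> 2"
    using neg by simp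
  have small: "shift_gain M P z \<le> 2" if "z \<in># C - Ci" for z
    using x_max that gain_x unfolding gain by fastforce
  have "6 \<le> card (subset_sums M Ci)" "int (card (subset_sums M Ci)) + 6 \<le> M"
    using neg by simp_all
  then have size: "6 \<le> count_mod M P" "int (count_mod M P) + 6 \<le> M"
    unfolding P_def count_mod_mod_mem[OF subset_sums_range[OF M]] by simp_all
  obtain y where y: "y \<in># C - Ci" "odd y" using neg by auto
  have "coprime y M" unfolding M_def using y(2) by simp
  then obtain l where l: "[y * l = 1] (mod M)" using cong_solve_coprime_int by blast
  have "z mod M \<in> {y mod M, (- y) mod M, (H - y) mod M, (- (H - y)) mod M}" if z: "z \<in># C - Ci" for z
  proof (rule residue_cases_of_scaled[OF MH _ y(2) _ l])
    show "2 < H" "y \<in># C" "z \<in># C" using size MH y(1) z by (auto dest: in_diffD)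
    show "(l * z) mod M \<in> {0, 1, 2, H - 1, H, H + 1, M - 2, M - 1}"
      using shift_gain_unit_cases[OF MH per size l small[OF y(1)] small[OF z]] .
  qed (use nonzero no_half no_compress in \<open>simp_all add: H_def\<close>)
  then show False using neg y(2) unfolding H_def by blast
qed

end
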